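(* Suppose $(\varepsilon,\beta,\gamma;(12))\in\mathrm{Par}(n)$. Fix a positive integer $d$, and let $r$ be the number of cycles of $\beta$ of length $d$. Let $f$ be the number of fixed points of $\gamma$. If $r>0$, then: <ul> <li>(i) $f\le (r-1)d$ if $d$ is even;</li> <li>(ii) $f\le (r-1)d+1$ if $d$ is odd.</li> </ul>
   Context: A Latin square of order $n$ is an $n\times n$ array with rows, columns and symbols indexed by $[n]$, each symbol occurring once in each row and each column, with triple set $O(L)$. Permutations act on the right; $\varepsilon$ is the identity; fixed points count as cycles of length $1$. A paratopism $(\alpha,\beta,\gamma;(12))$ maps $L$ to $L^\sigma$ with triple set $\{(y\beta,x\alpha,z\gamma):(x,y,z)\in O(L)\}$; it is an autoparatopism of $L$ if $L^\sigma=L$. $\mathrm{Par}(n)$ is the set of paratopisms that are autoparatopisms of at least one Latin square of order $n$. *)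

theory Defs
  imports "HOL-Combinatorics.Permutations"
begin

definition latin_square :: "nat \<Rightarrow> (nat \<times> nat \<times> nat) set \<Rightarrow> bool" where
  "latin_square n L \<longleftrightarrow>
     L \<subseteq> {1..n} \<times> {1..n} \<times> {1..n} \<and>
     (\<forall>x\<in>{1..n}. \<forall>y\<in>{1..n}. \<exists>!z. (x, y, z) \<in> L) \<and>
     (\<forall>x\<in>{1..n}. \<forall>z\<in>{1..n}. \<exists>!y. (x, y, z) \<in> L) \<and>
     (\<forall>y\<in>{1..n}. \<forall>z\<in>{1..n}. \<exists>!x. (x, y, z) \<in> L)"

text \<open>Image of L under the paratopism (alpha, beta, gamma; (12)); permutations act on the
  right, so x alpha is written alpha x.\<close>
definition paratopism_12_image ::
  "(nat \<Rightarrow> nat) \<Rightarrow> (nat \<Rightarrow> nat) \<Rightarrow> (nat \<Rightarrow> nat) \<Rightarrow> (nat \<times> nat \<times> nat) set \<Rightarrow> (nat \<times> nat \<times> nat) set" where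
  "paratopism_12_image \<alpha> \<beta> \<gamma> L = {(\<beta> y, \<alpha> x, \<gamma> z) | x y z. (x, y, z) \<in> L}"

definition in_Par_12 :: "nat \<Rightarrow> (nat \<Rightarrow> nat) \<Rightarrow> (nat \<Rightarrow> nat) \<Rightarrow> (nat \<Rightarrow> nat) \<Rightarrow> bool" where
  "in_Par_12 n \<alpha> \<beta> \<gamma> \<longleftrightarrow>
     \<alpha> permutes {1..n} \<and> \<beta> permutes {1..n} \<and> \<gamma> permutes {1..n} \<and>
     (\<exists>L. latin_square n L \<and> paratopism_12_image \<alpha> \<beta> \<gamma> L = L)"

definition cycle_of :: "(nat \<Rightarrow> nat) \<Rightarrow> nat \<Rightarrow> nat set" where
  "cycle_of \<pi> x = {(\<pi> ^^ k) x | k. True}"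

definition num_cycles_of_length :: "nat \<Rightarrow> (nat \<Rightarrow> nat) \<Rightarrow> nat \<Rightarrow> nat" where
  "num_cycles_of_length n \<pi> d = card {cycle_of \<pi> x | x. x \<in> {1..n} \<and> card (cycle_of \<pi> x) = d}"

definition num_fixed_points :: "nat \<Rightarrow> (nat \<Rightarrow> nat) \<Rightarrow> nat" where
  "num_fixed_points n \<pi> = card {x \<in> {1..n}. \<pi> x = x}"

end

theory Submission
  imports Defs "HOL-Combinatorics.Cycles" "HOL-Number_Theory.Cong"
begin

(* If (x, y, z) is a cell of L then so is (y\<beta>, x, z\<gamma>).  Applied twice, this shows that
   for a fixed point z of \<gamma> the map (x, y) \<mapsto> (x\<beta>, y\<beta>) permutes the cells containing z.
   Hence if (x, y, z) is a cell with z\<gamma> = z, then y lies on a \<beta>-cycle of the same length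
   as x, and if y = x\<beta>^j lies on the cycle of x itself, then x\<beta>^(2j+1) = x.
   Now fix x on a d-cycle of \<beta> and send each fixed point z of \<gamma> to the column of z in
   row x, an injective map.  Columns off the cycle of x lie on the other r - 1 cycles of
   length d, and a column x\<beta>^j on it requires d | 2j + 1: impossible for even d, and
   determining x\<beta>^j uniquely for odd d. *)

lemma cycle_of_eq_set_support:
  assumes "permutation p"
  shows "cycle_of p x = set (support p x)"
  using support_set[OF assms] unfolding cycle_of_def by auto

lemma self_in_cycle_of: "x \<in> cycle_of p x"
  unfolding cycle_of_def by (metis (mono_tags) CollectI funpow_0)

lemma finite_cycle_of:
  assumes "permutation p"
  shows "finite (cycle_of p x)"
  by (simp add: cycle_of_eq_set_support[OF assms])

lemma cycle_of_subset:
  assumes "p permutes A" "x \<in> A"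
  shows "cycle_of p x \<subseteq> A"
  using permutes_in_image[OF permutes_funpow[OF assms(1)]] assms(2)
  unfolding cycle_of_def by blast

lemma card_cycle_of:
  assumes "permutation p"
  shows "card (cycle_of p x) = least_power p x"
  using distinct_card[OF cycle_of_permutation[OF assms, of x]]
  by (simp add: cycle_of_eq_set_support[OF assms])

lemma funpow_eq_self_iff_card_cycle_of_dvd:
  assumes "permutation p"
  shows "(p ^^ k) x = x \<longleftrightarrow> card (cycle_of p x) dvd k"
  using least_power_dvd[OF assms] by (simp add: card_cycle_of[OF assms])

lemma funpow_eq_if_cong_card_cycle_of:
  assumes "permutation p" "[i = j] (mod card (cycle_of p x))"
  shows "(p ^^ i) x = (p ^^ j) x"
proof -
  have "(p ^^ card (cycle_of p x)) x = x"
    by (simp add: funpow_eq_self_iff_card_cycle_of_dvd[OF assms(1)])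
  then show ?thesis
    using assms(2) unfolding cong_def by (metis funpow_mod_eq)
qed

lemma cong_if_odd_dvd_two_mult_plus_one:
  fixes d i j :: nat
  assumes "odd d" "d dvd 2 * i + 1" "d dvd 2 * j + 1"
  shows "[i = j] (mod d)"
proof -
  have "[2 * i + 1 = 2 * j + 1] (mod d)"
    using assms(2,3) by (simp add: cong_def)
  then have "[2 * i = 2 * j] (mod d)"
    by (simp only: cong_add_rcancel_nat)
  moreover have "coprime 2 d"
    using assms(1) by simp
  ultimately show ?thesis
    by (simp add: cong_mult_lcancel_nat)
qed

lemma card_odd_return_points_le:
  assumes "permutation p"
  shows "card {(p ^^ j) x | j. (p ^^ (2 * j + 1)) x = x}
           \<le> (if odd (card (cycle_of p x)) then 1 else 0)"
proof -
  define d where "d = card (cycle_of p x)"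
  define H where "H = {(p ^^ j) x | j. (p ^^ (2 * j + 1)) x = x}"
  have returns: "d dvd 2 * j + 1" if "(p ^^ (2 * j + 1)) x = x" for j
    using that unfolding d_def by (simp only: funpow_eq_self_iff_card_cycle_of_dvd[OF assms])
  show ?thesis
  proof (cases "odd d")
    case True
    have "a = b" if "a \<in> H" "b \<in> H" for a b
    proof -
      obtain i j where a: "a = (p ^^ i) x" "d dvd 2 * i + 1"
        and b: "b = (p ^^ j) x" "d dvd 2 * j + 1"
        using \<open>a \<in> H\<close> \<open>b \<in> H\<close> returns unfolding H_def by blast
      have "[i = j] (mod card (cycle_of p x))"
        using cong_if_odd_dvd_two_mult_plus_one[OF True a(2) b(2)] by (simp only: d_def)
      then show "a = b"
        unfolding a(1) b(1) by (rule funpow_eq_if_cong_card_cycle_of[OF assms])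
    qed
    moreover have "H \<subseteq> cycle_of p x"
      unfolding H_def cycle_of_def by blast
    then have "finite H"
      using finite_cycle_of[OF assms] by (rule finite_subset)
    ultimately have "card H \<le> 1"
      by (simp add: card_le_Suc0_iff_eq)
    then show ?thesis
      using True by (simp add: H_def d_def)
  next
    case False
    have "(p ^^ (2 * j + 1)) x \<noteq> x" for j
    proof
      assume "(p ^^ (2 * j + 1)) x = x"
      then have "2 dvd 2 * j + 1"
        using False returns dvd_trans by blast
      then show False
        by simp
    qed
    then have "H = {}"
      unfolding H_def by blast
    then show ?thesis
      using False by (simp add: H_def d_def)
  qed
qed

lemma card_Union_cycles_of_length_Diff_le:
  assumes "\<beta> permutes {1..n}" "x\<^sub>0 \<in> {1..n}" "card (cycle_of \<beta> x\<^sub>0) = d"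
  shows "card (\<Union>{cycle_of \<beta> x | x. x \<in> {1..n} \<and> card (cycle_of \<beta> x) = d} - cycle_of \<beta> x\<^sub>0)
           \<le> (num_cycles_of_length n \<beta> d - 1) * d"
proof -
  define S where "S = {cycle_of \<beta> x | x. x \<in> {1..n} \<and> card (cycle_of \<beta> x) = d}"
  have "card (\<Union>S) \<le> (\<Sum>A\<in>S. card A)"
    by (rule card_Union_le_sum_card)
  also have "\<dots> = (\<Sum>A\<in>S. d)"
    by (rule sum.cong) (auto simp: S_def)
  also have "\<dots> = num_cycles_of_length n \<beta> d * d"
    by (simp add: S_def num_cycles_of_length_def)
  finally have "card (\<Union>S) \<le> num_cycles_of_length n \<beta> d * d" .
  moreover have "cycle_of \<beta> x\<^sub>0 \<subseteq> \<Union>S"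
    using assms(2,3) self_in_cycle_of unfolding S_def by blast
  moreover have "finite (cycle_of \<beta> x\<^sub>0)"
    using assms(1) finite_cycle_of permutation_permutes by blast
  ultimately show ?thesis
    using assms(3) by (simp add: S_def card_Diff_subset diff_mult_distrib)
qed

lemma latin_square_subset:
  assumes "latin_square n L"
  shows "L \<subseteq> {1..n} \<times> {1..n} \<times> {1..n}"
  using assms unfolding latin_square_def by (rule conjunct1)

lemma latin_square_row_unique:
  assumes "latin_square n L" "(x, y, z) \<in> L" "(x', y, z) \<in> L"
  shows "x = x'"
proof -
  have unique: "\<forall>y\<in>{1..n}. \<forall>z\<in>{1..n}. \<exists>!x. (x, y, z) \<in> L"
    using assms(1) unfolding latin_square_def by (elim conjE)
  have "y \<in> {1..n}" "z \<in> {1..n}"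
    using assms(2) latin_square_subset[OF assms(1)] by auto
  with unique have "\<exists>!x. (x, y, z) \<in> L"
    by simp
  with assms(2,3) show ?thesis
    by auto
qed

lemma latin_square_ex1_column:
  assumes "latin_square n L" "x \<in> {1..n}" "z \<in> {1..n}"
  shows "\<exists>!y. (x, y, z) \<in> L"
proof -
  have "\<forall>x\<in>{1..n}. \<forall>z\<in>{1..n}. \<exists>!y. (x, y, z) \<in> L"
    using assms(1) unfolding latin_square_def by (elim conjE)
  with assms(2,3) show ?thesis
    by simp
qed

lemma latin_square_symbol_unique:
  assumes "latin_square n L" "(x, y, z) \<in> L" "(x, y, z') \<in> L"
  shows "z = z'"
proof -
  have unique: "\<forall>x\<in>{1..n}. \<forall>y\<in>{1..n}. \<exists>!z. (x, y, z) \<in> L"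
    using assms(1) unfolding latin_square_def by (elim conjE)
  have "x \<in> {1..n}" "y \<in> {1..n}"
    using assms(2) latin_square_subset[OF assms(1)] by auto
  with unique have "\<exists>!z. (x, y, z) \<in> L"
    by simp
  with assms(2,3) show ?thesis
    by auto
qed

locale autoparatopism_id_12 =
  fixes n :: nat and \<beta> \<gamma> :: "nat \<Rightarrow> nat" and L :: "(nat \<times> nat \<times> nat) set"
  assumes latin: "latin_square n L"
    and \<beta>_permutes: "\<beta> permutes {1..n}"
    and invariant: "paratopism_12_image id \<beta> \<gamma> L = L"
begin

lemma permutation_\<beta>: "permutation \<beta>"
  using \<beta>_permutes permutation_permutes by blast

lemma autoparatopism_step:
  assumes "(x, y, z) \<in> L"
  shows "(\<beta> y, x, \<gamma> z) \<in> L"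
proof -
  have "(\<beta> y, id x, \<gamma> z) \<in> paratopism_12_image id \<beta> \<gamma> L"
    unfolding paratopism_12_image_def using assms by blast
  then show ?thesis
    by (simp add: invariant)
qed

lemma funpow_mem_if_fixed_symbol:
  assumes "(x, y, z) \<in> L" "\<gamma> z = z"
  shows "((\<beta> ^^ k) x, (\<beta> ^^ k) y, z) \<in> L"
proof (induction k)
  case 0
  show ?case using assms(1) by simp
next
  case (Suc k)
  then have "(\<beta> ((\<beta> ^^ k) y), (\<beta> ^^ k) x, z) \<in> L"
    using autoparatopism_step assms(2) by metis
  then have "(\<beta> ((\<beta> ^^ k) x), \<beta> ((\<beta> ^^ k) y), z) \<in> L"
    using autoparatopism_step assms(2) by metis
  then show ?case by simp
qed

lemma funpow_fixes_column_iff_row: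
  assumes "(x, y, z) \<in> L" "\<gamma> z = z"
  shows "(\<beta> ^^ k) y = y \<longleftrightarrow> (\<beta> ^^ k) x = x"
proof
  assume "(\<beta> ^^ k) y = y"
  then have "((\<beta> ^^ k) x, y, z) \<in> L"
    using funpow_mem_if_fixed_symbol[OF assms] by metis
  then show "(\<beta> ^^ k) x = x"
    using assms(1) latin_square_row_unique[OF latin] by blast
next
  assume "(\<beta> ^^ k) x = x"
  have "(\<beta> y, x, z) \<in> L"
    using autoparatopism_step[OF assms(1)] assms(2) by simp
  from funpow_mem_if_fixed_symbol[OF this assms(2), of k]
  have "(\<beta> ((\<beta> ^^ k) y), x, z) \<in> L"
    using \<open>(\<beta> ^^ k) x = x\<close> by (simp add: funpow_swap1)
  then have "\<beta> ((\<beta> ^^ k) y) = \<beta> y"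
    using \<open>(\<beta> y, x, z) \<in> L\<close> latin_square_row_unique[OF latin] by blast
  then show "(\<beta> ^^ k) y = y"
    using permutes_inj[OF \<beta>_permutes] by (simp add: inj_eq)
qed

lemma card_cycle_of_column_eq_row:
  assumes "(x, y, z) \<in> L" "\<gamma> z = z"
  shows "card (cycle_of \<beta> y) = card (cycle_of \<beta> x)"
proof -
  have "card (cycle_of \<beta> y) dvd k \<longleftrightarrow> card (cycle_of \<beta> x) dvd k" for k
    using funpow_fixes_column_iff_row[OF assms]
    by (simp add: funpow_eq_self_iff_card_cycle_of_dvd[OF permutation_\<beta>])
  then show ?thesis
    by (metis dvd_antisym dvd_refl)
qed

lemma funpow_two_mult_plus_one_fixes_row:
  assumes "(x, (\<beta> ^^ j) x, z) \<in> L" "\<gamma> z = z"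
  shows "(\<beta> ^^ (2 * j + 1)) x = x"
proof -
  have "((\<beta> ^^ Suc j) x, x, z) \<in> L"
    using autoparatopism_step[OF assms(1)] assms(2) by simp
  from funpow_mem_if_fixed_symbol[OF this assms(2), of j]
  have "((\<beta> ^^ j) ((\<beta> ^^ Suc j) x), (\<beta> ^^ j) x, z) \<in> L" .
  moreover have "2 * j + 1 = j + Suc j"
    by simp
  ultimately have "((\<beta> ^^ (2 * j + 1)) x, (\<beta> ^^ j) x, z) \<in> L"
    by (simp only: funpow_add o_apply)
  then show ?thesis
    using assms(1) latin_square_row_unique[OF latin] by blast
qed

definition column_of :: "nat \<Rightarrow> nat \<Rightarrow> nat" where
  "column_of x z = (THE y. (x, y, z) \<in> L)"

lemma column_of_mem:
  assumes "x \<in> {1..n}" "z \<in> {1..n}"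
  shows "(x, column_of x z, z) \<in> L"
  unfolding column_of_def using latin_square_ex1_column[OF latin assms] by (rule theI')

lemma inj_on_column_of:
  assumes "x \<in> {1..n}"
  shows "inj_on (column_of x) {1..n}"
  using column_of_mem[OF assms] latin_square_symbol_unique[OF latin] by (metis inj_onI)

lemma card_columns_off_cycle_le:
  assumes "x\<^sub>0 \<in> {1..n}" "card (cycle_of \<beta> x\<^sub>0) = d"
  shows "card (column_of x\<^sub>0 ` {z \<in> {1..n}. \<gamma> z = z} - cycle_of \<beta> x\<^sub>0)
           \<le> (num_cycles_of_length n \<beta> d - 1) * d"
proof -
  define U where "U = \<Union>{cycle_of \<beta> x | x. x \<in> {1..n} \<and> card (cycle_of \<beta> x) = d}"
  have "column_of x\<^sub>0 ` {z \<in> {1..n}. \<gamma> z = z} \<subseteq> U"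
  proof
    fix y assume "y \<in> column_of x\<^sub>0 ` {z \<in> {1..n}. \<gamma> z = z}"
    then obtain z where z: "z \<in> {1..n}" "\<gamma> z = z" "y = column_of x\<^sub>0 z"
      by blast
    then have "(x\<^sub>0, y, z) \<in> L"
      using column_of_mem[OF assms(1)] by simp
    then have "y \<in> {1..n}" "card (cycle_of \<beta> y) = d"
      using latin_square_subset[OF latin] card_cycle_of_column_eq_row z(2) assms(2) by auto
    then show "y \<in> U"
      unfolding U_def using self_in_cycle_of by blast
  qed
  moreover have "U \<subseteq> {1..n}"
    unfolding U_def using cycle_of_subset[OF \<beta>_permutes] by blast
  ultimately have "card (column_of x\<^sub>0 ` {z \<in> {1..n}. \<gamma> z = z} - cycle_of \<beta> x\<^sub>0)
                     \<le> card (U - cycle_of \<beta> x\<^sub>0)"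
    by (intro card_mono) (auto simp: finite_subset)
  also have "\<dots> \<le> (num_cycles_of_length n \<beta> d - 1) * d"
    unfolding U_def by (rule card_Union_cycles_of_length_Diff_le[OF \<beta>_permutes assms])
  finally show ?thesis .
qed

lemma card_columns_on_cycle_le:
  assumes "x\<^sub>0 \<in> {1..n}"
  shows "card (column_of x\<^sub>0 ` {z \<in> {1..n}. \<gamma> z = z} \<inter> cycle_of \<beta> x\<^sub>0)
           \<le> (if odd (card (cycle_of \<beta> x\<^sub>0)) then 1 else 0)"
proof -
  define H where "H = {(\<beta> ^^ j) x\<^sub>0 | j. (\<beta> ^^ (2 * j + 1)) x\<^sub>0 = x\<^sub>0}"
  have "column_of x\<^sub>0 ` {z \<in> {1..n}. \<gamma> z = z} \<inter> cycle_of \<beta> x\<^sub>0 \<subseteq> H"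
  proof
    fix y assume "y \<in> column_of x\<^sub>0 ` {z \<in> {1..n}. \<gamma> z = z} \<inter> cycle_of \<beta> x\<^sub>0"
    then obtain z j where z: "z \<in> {1..n}" "\<gamma> z = z" "y = column_of x\<^sub>0 z"
      and j: "y = (\<beta> ^^ j) x\<^sub>0"
      unfolding cycle_of_def by blast
    then have "(x\<^sub>0, (\<beta> ^^ j) x\<^sub>0, z) \<in> L"
      using column_of_mem[OF assms] by simp
    then have "(\<beta> ^^ (2 * j + 1)) x\<^sub>0 = x\<^sub>0"
      using funpow_two_mult_plus_one_fixes_row z(2) by blast
    then show "y \<in> H"
      unfolding H_def using j by blast
  qed
  moreover have "H \<subseteq> cycle_of \<beta> x\<^sub>0"
    unfolding H_def cycle_of_def by blast
  then have "finite H"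
    using finite_cycle_of[OF permutation_\<beta>] by (rule finite_subset)
  ultimately have "card (column_of x\<^sub>0 ` {z \<in> {1..n}. \<gamma> z = z} \<inter> cycle_of \<beta> x\<^sub>0) \<le> card H"
    by (simp add: card_mono)
  also have "\<dots> \<le> (if odd (card (cycle_of \<beta> x\<^sub>0)) then 1 else 0)"
    unfolding H_def by (rule card_odd_return_points_le[OF permutation_\<beta>])
  finally show ?thesis .
qed

lemma card_fixed_points_le:
  assumes "x\<^sub>0 \<in> {1..n}" "card (cycle_of \<beta> x\<^sub>0) = d"
  shows "num_fixed_points n \<gamma> \<le> (num_cycles_of_length n \<beta> d - 1) * d + (if odd d then 1 else 0)"
proof -
  define Z where "Z = {z \<in> {1..n}. \<gamma> z = z}"
  let ?col = "column_of x\<^sub>0" and ?C = "cycle_of \<beta> x\<^sub>0"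
  have "Z \<subseteq> {1..n}"
    unfolding Z_def by blast
  then have "num_fixed_points n \<gamma> = card (?col ` Z)"
    using card_image[OF inj_on_subset[OF inj_on_column_of[OF assms(1)]]]
    by (simp add: num_fixed_points_def Z_def)
  also have "\<dots> \<le> card (?col ` Z - ?C) + card (?col ` Z \<inter> ?C)"
    by (metis Un_Diff_Int card_Un_le)
  also have "\<dots> \<le> (num_cycles_of_length n \<beta> d - 1) * d + (if odd d then 1 else 0)"
    using card_columns_off_cycle_le[OF assms] card_columns_on_cycle_le[OF assms(1)] assms(2)
    unfolding Z_def by (intro add_mono) simp_all
  finally show ?thesis .
qed

end

theorem theorem4p4:
  fixes n d :: nat and \<beta> \<gamma> :: "nat \<Rightarrow> nat"
  assumes "in_Par_12 n id \<beta> \<gamma>"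
    and "d > 0"
    and "num_cycles_of_length n \<beta> d > 0"
  shows "(even d \<longrightarrow> num_fixed_points n \<gamma> \<le> (num_cycles_of_length n \<beta> d - 1) * d) \<and>
         (odd d \<longrightarrow> num_fixed_points n \<gamma> \<le> (num_cycles_of_length n \<beta> d - 1) * d + 1)"
proof -
  obtain L where "latin_square n L" "\<beta> permutes {1..n}" "paratopism_12_image id \<beta> \<gamma> L = L"
    using assms(1) unfolding in_Par_12_def by blast
  then interpret autoparatopism_id_12 n \<beta> \<gamma> L
    by unfold_locales
  have "{cycle_of \<beta> x | x. x \<in> {1..n} \<and> card (cycle_of \<beta> x) = d} \<noteq> {}"
    using assms(3) unfolding num_cycles_of_length_def by (metis card.empty less_irrefl)
  then obtain x\<^sub>0 where "x\<^sub>0 \<in> {1..n}" "card (cycle_of \<beta> x\<^sub>0) = d"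
    by blast
  from card_fixed_points_le[OF this] show ?thesis
    by (simp split: if_splits)
qed

end
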